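(* Let $\theta\in(0,1)$ and let $P_\theta$ be the geometric distribution $p_\theta(i)=(1-\theta)\theta^i$, $i\ge0$. Then the Golomb code $\mathrm{G}k$ with $k=\lceil -1/\log_2\theta\rceil$ minimizes the maximal pointwise redundancy $R^*(N,P_\theta)=\sup_{i\ge0}\,[n(i)+\log_2 p_\theta(i)]$ over all binary prefix codes for the nonnegative integers.
   Context: A binary prefix code for the nonnegative integers assigns to each $i\ge 0$ a codeword $c(i)\in\{0,1\}^*$ such that no codeword is a prefix of another; $n(i)$ is the length of $c(i)$ and $N=\{n(i)\}$. For an integer $k\ge1$, let $b(x,k)$ ($0\le x<k$) be the $(x+1)$th codeword of the complete alphabetic binary code on $k$ items, in which the first $2^{\lceil\log_2k\rceil}-k$ items have length $\lfloor\log_2k\rfloor$ and the remaining $2k-2^{\lceil\log_2k\rceil}$ have length $\lceil\log_2k\rceil$ (empty string if $k=1$). The Golomb code $\mathrm{G}k$ assigns to $j\ge0$ the codeword $1^{\lfloor j/k\rfloor}\,0\,b(j\bmod k,k)$. *)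

theory Defs
  imports Complex_Main "HOL-Library.Sublist" "HOL-Library.Extended_Real"
begin

definition prefix_code :: "(nat \<Rightarrow> bool list) \<Rightarrow> bool" where
  "prefix_code c \<longleftrightarrow> (\<forall>i j. i \<noteq> j \<longrightarrow> \<not> prefix (c i) (c j))"

definition geom_pmf :: "real \<Rightarrow> nat \<Rightarrow> real" where
  "geom_pmf \<theta> i = (1 - \<theta>) * \<theta> ^ i"

text \<open>Maximal pointwise redundancy R*(N,P) = sup_i [n(i) + log2 p(i)], in the
  extended reals (it may be +infinity).\<close>
definition max_pointwise_redundancy :: "(nat \<Rightarrow> bool list) \<Rightarrow> (nat \<Rightarrow> real) \<Rightarrow> ereal" where
  "max_pointwise_redundancy c p = (SUP i. ereal (real (length (c i)) + log 2 (p i)))"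

definition nat_bits :: "nat \<Rightarrow> nat \<Rightarrow> bool list" where
  "nat_bits n v = map (\<lambda>i. odd (v div 2 ^ (n - 1 - i))) [0..<n]"

text \<open>b(x,k): the (x+1)th codeword of the complete alphabetic binary code on k items.
  With m = ceil(log2 k) and u = 2^m - k, the first u items get the (m-1)-bit
  (= floor(log2 k) bits when u > 0) codewords 0..u-1, the remaining ones get the m-bit
  codewords x+u; codewords are in lexicographic order.\<close>
definition alph_code :: "nat \<Rightarrow> nat \<Rightarrow> bool list" where
  "alph_code x k =
     (let m = nat \<lceil>log 2 (real k)\<rceil>; u = 2 ^ m - k in
      if x < u then nat_bits (nat \<lfloor>log 2 (real k)\<rfloor>) x else nat_bits m (x + u))"

definition golomb :: "nat \<Rightarrow> nat \<Rightarrow> bool list" where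
  "golomb k j = replicate (j div k) True @ [False] @ alph_code (j mod k) k"

end

theory Submission
  imports Defs
begin

text \<open>Write \<open>a = -log\<^sub>2 \<theta>\<close>, so that the redundancy of a code at \<open>i\<close> is its excess
  \<open>n(i) - i\<cdot>a\<close> plus the constant \<open>log\<^sub>2 (1 - \<theta>)\<close>, and \<open>k\<close> is the least integer with \<open>k\<cdot>a \<ge> 1\<close>.
  For \<open>Gk\<close> the excess is largest on the first block \<open>j < k\<close>, since each further block costs one
  more bit but lowers the line \<open>i\<cdot>a\<close> by \<open>k\<cdot>a \<ge> 1\<close>. Conversely, if some prefix code had excess
  below that of \<open>Gk\<close> at \<open>s < k\<close> everywhere, then, as \<open>(k - 1)\<cdot>a < 1\<close>, its lengths would be
  bounded by those of \<open>G(k-1)\<close>. The Kraft sum of \<open>G(k-1)\<close> is exactly 1, so by the Kraft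
  inequality the code would have exactly the lengths of \<open>G(k-1)\<close>, whose excess is unbounded,
  again because \<open>(k - 1)\<cdot>a < 1\<close>: a contradiction.\<close>

lemma length_nat_bits [simp]: "length (nat_bits n v) = n"
  by (simp add: nat_bits_def)

lemma nat_bits_Suc: "nat_bits (Suc n) v = nat_bits n (v div 2) @ [odd v]"
proof -
  have "odd (v div 2 ^ (Suc n - 1 - i)) = odd (v div 2 div 2 ^ (n - 1 - i))" if "i < n" for i
  proof -
    from that have "Suc n - 1 - i = Suc (n - 1 - i)" by simp
    then show ?thesis by (simp add: div_mult2_eq)
  qed
  then show ?thesis by (simp add: nat_bits_def)
qed

lemma nat_eq_iff_div2_parity: "(x::nat) = y \<longleftrightarrow> x div 2 = y div 2 \<and> odd x = odd y"
  by presburger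

lemma nat_bits_inject:
  assumes "v < 2 ^ n" "w < 2 ^ n"
  shows "nat_bits n v = nat_bits n w \<longleftrightarrow> v = w"
  using assms
proof (induction n arbitrary: v w)
  case (Suc n)
  then have "v div 2 < 2 ^ n" "w div 2 < 2 ^ n" by auto
  with Suc.IH have "nat_bits (Suc n) v = nat_bits (Suc n) w \<longleftrightarrow> v div 2 = w div 2 \<and> odd v = odd w"
    by (simp add: nat_bits_Suc)
  then show ?case
    using nat_eq_iff_div2_parity by blast
qed simp

lemma ex_power_two_bracket:
  fixes k :: nat
  assumes "1 \<le> k"
  obtains m :: nat where "k \<le> 2 ^ m" "2 ^ m < 2 * k"
proof (cases "k = 1")
  case True
  then show ?thesis by (intro that[of 0]) auto
next
  case False
  with assms obtain i where "2 ^ i < k" "k \<le> 2 ^ (i + 1)"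
    using ex_power_ivl2[of 2 k] by auto
  then show ?thesis by (intro that[of "i + 1"]) auto
qed

lemma alph_code_eq:
  assumes "k \<le> 2 ^ m" "2 ^ m < 2 * k"
  shows "alph_code r k =
    (if r < 2 ^ m - k then nat_bits (m - 1) r else nat_bits m (r + (2 ^ m - k)))"
proof (cases m)
  case 0
  with assms have "k = 1" by simp
  with 0 show ?thesis by (simp add: alph_code_def)
next
  case (Suc i)
  with assms have lo: "2 ^ i < k" and hi: "k \<le> 2 ^ (i + 1)" by simp_all
  have "\<lceil>log 2 (real k)\<rceil> = int i + 1"
    using ceiling_log_nat_eq_if[OF lo hi] by simp
  moreover have "\<lfloor>log 2 (real k)\<rfloor> = int i" if "k < 2 ^ (i + 1)"
    using floor_log_nat_eq_if[of 2 i k] lo that by simp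
  ultimately show ?thesis
    using Suc by (auto simp: alph_code_def Let_def nat_add_distrib)
qed

lemma length_alph_code:
  assumes "k \<le> 2 ^ m" "2 ^ m \<le> 2 * k" "r < k"
  shows "length (alph_code r k) = (if r < 2 ^ m - k then m - 1 else m)"
proof (cases "2 ^ m = 2 * k")
  case True
  then obtain i where m: "m = Suc i" and k: "k = 2 ^ i"
    by (cases m) auto
  then show ?thesis
    using alph_code_eq[of k i r] assms(3) by simp
qed (use assms alph_code_eq[of k m r] in simp)

lemma alph_code_prefix_imp_eq:
  assumes "r1 < k" "r2 < k" "prefix (alph_code r1 k) (alph_code r2 k)"
  shows "r1 = r2"
proof -
  obtain m where m: "k \<le> 2 ^ m" "2 ^ m < 2 * k"
    using ex_power_two_bracket[of k] assms(1) by auto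
  define u where "u = 2 ^ m - k"
  show ?thesis
  proof (cases m)
    case 0
    with m assms(1,2) show ?thesis by simp
  next
    case (Suc n)
    \<comment> \<open>every codeword of \<open>r\<close> starts with the \<open>n\<close> bits of \<open>h r\<close>; those of \<open>r \<ge> u\<close> have one more bit\<close>
    define h where "h r = (if r < u then r else (r + u) div 2)" for r
    have h_bound: "h r < 2 ^ n" if "r < k" for r
      using that m Suc unfolding h_def u_def by auto
    have code: "alph_code r k = (if r < u then nat_bits n (h r) else nat_bits n (h r) @ [odd (r + u)])" for r
      using alph_code_eq[OF m, of r] Suc unfolding h_def u_def by (simp add: nat_bits_Suc)
    from assms(3) obtain zs where "alph_code r2 k = alph_code r1 k @ zs"
      by (auto simp: prefix_def)
    then have "take n (alph_code r1 k) = take n (alph_code r2 k)"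
      unfolding code by (simp split: if_splits)
    then have "nat_bits n (h r1) = nat_bits n (h r2)"
      unfolding code by (simp split: if_splits)
    then have "h r1 = h r2"
      using h_bound assms(1,2) nat_bits_inject by blast
    moreover have "r1 < u \<longleftrightarrow> r2 < u"
      using \<open>h r1 = h r2\<close> prefix_length_le[OF assms(3)] unfolding code h_def
      by (auto split: if_splits)
    moreover have "odd (r1 + u) = odd (r2 + u)" if "\<not> r1 < u" "\<not> r2 < u"
      using assms(3) \<open>h r1 = h r2\<close> that unfolding code by auto
    ultimately show ?thesis
      using nat_eq_iff_div2_parity[of "r1 + u" "r2 + u"] unfolding h_def by (auto split: if_splits)
  qed
qed

lemma prefix_unary_prefixD:
  "prefix (replicate a True @ False # xs) (replicate b True @ False # ys) \<Longrightarrow> a = b \<and> prefix xs ys"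
proof (induction a arbitrary: b)
  case 0
  then show ?case by (cases b) auto
next
  case (Suc a)
  then show ?case by (cases b) auto
qed

lemma prefix_code_golomb:
  assumes "1 \<le> k"
  shows "prefix_code (golomb k)"
  unfolding prefix_code_def
proof (intro allI impI notI)
  fix i j
  assume "i \<noteq> j" and "prefix (golomb k i) (golomb k j)"
  then have "i div k = j div k \<and> prefix (alph_code (i mod k) k) (alph_code (j mod k) k)"
    unfolding golomb_def by (intro prefix_unary_prefixD) simp
  moreover have "i mod k < k" "j mod k < k"
    using assms by auto
  ultimately have "i div k = j div k" "i mod k = j mod k"
    using alph_code_prefix_imp_eq by blast+
  with \<open>i \<noteq> j\<close> show False
    by (metis div_mult_mod_eq)
qed

lemma card_prefix_extensions:
  fixes u :: "bool list"
  assumes "length u \<le> L"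
  shows "card {w. length w = L \<and> prefix u w} = 2 ^ (L - length u)"
proof -
  have "{w. length w = L \<and> prefix u w} = (\<lambda>v. u @ v) ` {v. length v = L - length u}"
  proof (intro set_eqI iffI)
    fix w
    assume "w \<in> {w. length w = L \<and> prefix u w}"
    then obtain v where "w = u @ v" "length w = L"
      by (auto simp: prefix_def)
    then show "w \<in> (\<lambda>v. u @ v) ` {v. length v = L - length u}"
      by auto
  qed (use assms in auto)
  moreover have "card {v :: bool list. length v = L - length u} = 2 ^ (L - length u)"
    using card_lists_length_eq[of "UNIV :: bool set"] by simp
  ultimately show ?thesis
    by (simp add: card_image inj_on_def)
qed

lemma kraft_inequality:
  assumes "prefix_code c" "finite I"
  shows "(\<Sum>i\<in>I. (1/2::real) ^ length (c i)) \<le> 1"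
proof -
  define L where "L = Max ((\<lambda>i. length (c i)) ` I)"
  have len_le: "length (c i) \<le> L" if "i \<in> I" for i
    using assms(2) that unfolding L_def by auto
  define E where "E i = {w. length w = L \<and> prefix (c i) w}" for i
  have finite_words: "finite {w :: bool list. length w = L}"
    using finite_lists_length_eq[of "UNIV :: bool set"] by simp
  have disjoint: "E i \<inter> E j = {}" if "i \<noteq> j" for i j
  proof (rule ccontr)
    assume "E i \<inter> E j \<noteq> {}"
    then obtain w where "prefix (c i) w" "prefix (c j) w"
      unfolding E_def by blast
    moreover have "\<not> prefix (c i) (c j)" "\<not> prefix (c j) (c i)"
      using assms(1) \<open>i \<noteq> j\<close> unfolding prefix_code_def by simp_all
    ultimately show False
      using prefix_same_cases by blast
  qed
  have finite_E: "finite (E i)" for i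
    using finite_words unfolding E_def by (rule rev_finite_subset) blast
  have "(\<Sum>i\<in>I. 2 ^ (L - length (c i))) = (\<Sum>i\<in>I. card (E i))"
    by (rule sum.cong) (simp_all add: E_def card_prefix_extensions len_le)
  also have "\<dots> = card (\<Union>i\<in>I. E i)"
    using assms(2) disjoint finite_E by (intro card_UN_disjoint[symmetric]) auto
  also have "\<dots> \<le> card {w :: bool list. length w = L}"
    using finite_words by (intro card_mono) (auto simp: E_def)
  also have "\<dots> = 2 ^ L"
    using card_lists_length_eq[of "UNIV :: bool set"] by simp
  finally have "real (\<Sum>i\<in>I. 2 ^ (L - length (c i))) \<le> real (2 ^ L)"
    by (simp only: of_nat_le_iff)
  have "(\<Sum>i\<in>I. (1/2::real) ^ length (c i)) = (\<Sum>i\<in>I. 2 ^ (L - length (c i))) / 2 ^ L"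
    unfolding sum_divide_distrib by (rule sum.cong) (simp_all add: len_le power_one_over power_diff)
  also have "\<dots> \<le> 1"
    using \<open>real (\<Sum>i\<in>I. 2 ^ (L - length (c i))) \<le> real (2 ^ L)\<close> by simp
  finally show ?thesis .
qed

lemma length_golomb: "length (golomb k j) = j div k + 1 + length (alph_code (j mod k) k)"
  by (simp add: golomb_def)

lemma sum_alph_code_lengths:
  assumes "1 \<le> k"
  shows "(\<Sum>r<k. (1/2::real) ^ length (alph_code r k)) = 1"
proof -
  obtain m where m: "k \<le> 2 ^ m" "2 ^ m < 2 * k"
    using ex_power_two_bracket[OF assms] .
  define u where "u = 2 ^ m - k"
  have "u < k"
    using m unfolding u_def by simp
  have length_eq: "length (alph_code r k) = (if r < u then m - 1 else m)" if "r < k" for r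
    using length_alph_code[of k m r] m that unfolding u_def by simp
  have "{..<k} = {..<u} \<union> {u..<k}" "{..<u} \<inter> {u..<k} = {}"
    using \<open>u < k\<close> by auto
  then have "(\<Sum>r<k. (1/2::real) ^ length (alph_code r k))
      = (\<Sum>r<u. (1/2::real) ^ length (alph_code r k)) + (\<Sum>r\<in>{u..<k}. (1/2) ^ length (alph_code r k))"
    by (simp add: sum.union_disjoint)
  also have "\<dots> = real u * (1/2) ^ (m - 1) + real (k - u) * (1/2) ^ m"
    using \<open>u < k\<close> by (simp add: length_eq)
  also have "real u * (1/2::real) ^ (m - 1) = 2 * real u * (1/2) ^ m"
    \<comment> \<open>the truncation in \<open>m - 1\<close> is harmless: \<open>m = 0\<close> forces \<open>k = 1\<close> and \<open>u = 0\<close>\<close>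
    using m unfolding u_def by (cases m) auto
  also have "2 * real u * (1/2) ^ m + real (k - u) * (1/2::real) ^ m = (real u + real k) / 2 ^ m"
    using \<open>u < k\<close> by (simp add: of_nat_diff power_one_over field_simps)
  also have "real u + real k = 2 ^ m"
    using m unfolding u_def by (simp add: of_nat_diff)
  finally show ?thesis
    by simp
qed

lemma sum_golomb_lengths_blocks:
  assumes "1 \<le> k"
  shows "(\<Sum>i<P * k. (1/2::real) ^ length (golomb k i)) = 1 - (1/2) ^ P"
proof -
  have block: "(\<Sum>i\<in>{q * k..<q * k + k}. (1/2::real) ^ length (golomb k i)) = (1/2) ^ Suc q" for q
  proof -
    have "(\<Sum>i\<in>{q * k..<q * k + k}. (1/2::real) ^ length (golomb k i))
        = (\<Sum>r<k. (1/2::real) ^ length (golomb k (r + q * k)))"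
      using sum.shift_bounds_nat_ivl[of _ 0 "q * k" k] by (simp add: atLeast0LessThan add.commute)
    also have "\<dots> = (\<Sum>r<k. (1/2) ^ Suc q * (1/2) ^ length (alph_code r k))"
      using assms by (intro sum.cong) (simp_all add: length_golomb power_add)
    also have "\<dots> = (1/2) ^ Suc q"
      by (simp only: sum_distrib_left[symmetric] sum_alph_code_lengths[OF assms] mult_1_right)
    finally show ?thesis .
  qed
  have "(\<Sum>i<P * k. (1/2::real) ^ length (golomb k i)) = (\<Sum>q<P. (1/2) ^ Suc q)"
    by (simp add: sum.nat_group[symmetric] block)
  also have "\<dots> = 1 - (1/2) ^ P"
    by (induction P) simp_all
  finally show ?thesis .
qed

lemma golomb_lengths_sums:
  assumes "1 \<le> k"
  shows "(\<lambda>i. (1/2::real) ^ length (golomb k i)) sums 1"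
proof -
  let ?f = "\<lambda>i. (1/2::real) ^ length (golomb k i)"
  have "(\<Sum>i<n. ?f i) \<le> (\<Sum>i<n * k. ?f i)" for n
    using assms by (intro sum_mono2) auto
  also have "(\<Sum>i<n * k. ?f i) \<le> 1" for n
    using sum_golomb_lengths_blocks[OF assms] by simp
  finally have "summable ?f"
    by (intro summableI_nonneg_bounded) auto
  have "strict_mono (\<lambda>n. n * k)"
    using assms by (simp add: strict_mono_def)
  with \<open>summable ?f\<close> have "(\<lambda>n. \<Sum>i<n * k. ?f i) \<longlonglongrightarrow> suminf ?f"
    using LIMSEQ_subseq_LIMSEQ[OF summable_LIMSEQ] by (simp add: comp_def)
  moreover have "(\<lambda>n. \<Sum>i<n * k. ?f i) \<longlonglongrightarrow> 1"
    unfolding sum_golomb_lengths_blocks[OF assms]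
    by (auto intro!: tendsto_eq_intros LIMSEQ_power_zero)
  ultimately have "suminf ?f = 1"
    by (rule LIMSEQ_unique)
  with \<open>summable ?f\<close> show ?thesis
    by (simp add: sums_iff)
qed

lemma prefix_code_lengths_eq_if_le_complete:
  assumes "prefix_code c" "(\<lambda>i. (1/2::real) ^ M i) sums 1" "\<And>i. length (c i) \<le> M i"
  shows "length (c i) = M i"
proof (rule ccontr)
  let ?f = "\<lambda>i. (1/2::real) ^ length (c i)" and ?g = "\<lambda>i. (1/2::real) ^ M i"
  assume "length (c i) \<noteq> M i"
  with assms(3) have "length (c i) < M i"
    using le_neq_implies_less by blast
  have kraft: "(\<Sum>i<n. ?f i) \<le> 1" for n
    using kraft_inequality[OF assms(1)] by simp
  then have "summable ?f"
    by (intro summableI_nonneg_bounded) auto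
  have "summable ?g"
    using assms(2) by (simp add: sums_iff)
  have "0 < (\<Sum>n. ?f n - ?g n)"
  proof (rule suminf_pos2)
    show "summable (\<lambda>n. ?f n - ?g n)"
      using \<open>summable ?f\<close> \<open>summable ?g\<close> by (rule summable_diff)
    show "0 \<le> ?f n - ?g n" for n
      using assms(3)[of n] by (simp add: power_decreasing)
    show "0 < ?f i - ?g i"
      using \<open>length (c i) < M i\<close> by (simp add: power_strict_decreasing)
  qed
  also have "(\<Sum>n. ?f n - ?g n) = suminf ?f - 1"
    using suminf_diff[OF \<open>summable ?f\<close> \<open>summable ?g\<close>] assms(2) by (simp add: sums_iff)
  finally have "1 < suminf ?f"
    by simp
  moreover have "suminf ?f \<le> 1"
    using \<open>summable ?f\<close> kraft by (rule suminf_le_const)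
  ultimately show False
    by simp
qed

lemma golomb_Suc_le_golomb:
  fixes a :: real
  assumes "1 \<le> k" "0 \<le> a" "real k * a \<le> 1" "s \<le> k"
  shows "length (golomb (Suc k) s) - real s * a + real i * a \<le> 1 + length (golomb k i)"
proof -
  obtain m where m: "Suc k \<le> 2 ^ m" "2 ^ m < 2 * Suc k"
    using ex_power_two_bracket[of "Suc k"] by auto
  with assms(1) have "1 \<le> m"
    by (cases m) auto
  then have "(2::nat) ^ m = 2 * 2 ^ (m - 1)"
    by (cases m) auto
  with m have "2 ^ m \<le> 2 * k"
    by arith
  define u where "u = 2 ^ m - Suc k"
  define q where "q = i div k"
  define r where "r = i mod k"
  \<comment> \<open>the same \<open>m\<close> serves both codes; \<open>Gk\<close> has one more short codeword than \<open>G(k+1)\<close>\<close>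
  define ls where "ls = (if s < u then m - 1 else m)"
  define lr where "lr = (if r < u + 1 then m - 1 else m)"
  have "r < k"
    using assms(1) unfolding r_def by simp
  have len_s: "length (golomb (Suc k) s) = 1 + ls"
    using length_alph_code[of "Suc k" m s] m assms(4) unfolding u_def ls_def by (simp add: length_golomb)
  have "2 ^ m - k = u + 1"
    using m unfolding u_def by arith
  then have len_i: "length (golomb k i) = q + 1 + lr"
    using length_alph_code[of k m r] m \<open>r < k\<close> \<open>2 ^ m \<le> 2 * k\<close>
    unfolding q_def r_def lr_def by (simp add: length_golomb)
  have "i = q * k + r"
    unfolding q_def r_def by simp
  then have "real i * a = real q * (real k * a) + real r * a"
    by (simp add: algebra_simps)
  moreover have "real q * (real k * a) \<le> real q"
    using assms(3) by (simp add: mult_left_le)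
  moreover have "real ls + real r * a \<le> 1 + real lr + real s * a"
  proof (cases "r \<le> s")
    case True
    then have "real r * a \<le> real s * a"
      using assms(2) by (simp add: mult_right_mono)
    moreover have "ls \<le> 1 + lr"
      using \<open>1 \<le> m\<close> unfolding ls_def lr_def by auto
    ultimately show ?thesis
      by linarith
  next
    case False
    then have "ls \<le> lr"
      unfolding ls_def lr_def by auto
    moreover have "real r * a \<le> real k * a"
      using \<open>r < k\<close> assms(2) by (simp add: mult_right_mono)
    moreover have "0 \<le> real s * a"
      using assms(2) by simp
    ultimately show ?thesis
      using assms(3) by linarith
  qed
  ultimately show ?thesis
    unfolding len_s len_i by simp
qed

lemma golomb_le_golomb_mod:
  fixes a :: real
  assumes "1 \<le> real k * a"
  shows "length (golomb k j) - real j * a \<le> length (golomb k (j mod k)) - real (j mod k) * a"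
proof -
  have "1 \<le> k"
    using assms by (cases k) auto
  have "real j = real (j div k) * real k + real (j mod k)"
    by (metis div_mult_mod_eq of_nat_add of_nat_mult)
  moreover have "real (j div k) \<le> real (j div k) * (real k * a)"
    using assms by (simp add: mult_le_cancel_left1)
  ultimately show ?thesis
    using \<open>1 \<le> k\<close> by (simp add: length_golomb algebra_simps)
qed

lemma ex_prefix_code_length_ge_golomb:
  fixes a :: real
  assumes "prefix_code c" "1 \<le> k" "0 \<le> a" "(real k - 1) * a < 1" "s < k"
  shows "\<exists>i. length (golomb k s) - real s * a \<le> length (c i) - real i * a"
proof (cases "k = 1")
  case True
  with assms(5) have "s = 0"
    by simp
  have "length (alph_code 0 1) = 0"
    using length_alph_code[of 1 0 0] by simp
  moreover have "c 0 \<noteq> []"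
    using assms(1) unfolding prefix_code_def by (metis Nil_prefix zero_neq_one)
  ultimately show ?thesis
    using True \<open>s = 0\<close> by (intro exI[of _ 0]) (simp add: length_golomb Suc_le_eq)
next
  case False
  from assms(2) obtain k' where k: "k = Suc k'"
    by (cases k) auto
  with False have "1 \<le> k'"
    by simp
  from k assms(4) have "real k' * a < 1"
    by simp
  define T where "T = length (golomb k s) - real s * a"
  define M where "M i = length (golomb k' i)" for i
  show ?thesis
  proof (rule ccontr)
    assume "\<not> ?thesis"
    then have below: "length (c i) < T + real i * a" for i
      unfolding T_def by (meson diff_le_eq not_le le_diff_eq)
    have "length (c i) \<le> M i" for i
      using below[of i] golomb_Suc_le_golomb[of k' a s i] \<open>1 \<le> k'\<close> \<open>real k' * a < 1\<close> assms(3,5)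
      unfolding T_def M_def k by simp
    then have c_eq: "length (c i) = M i" for i
      using prefix_code_lengths_eq_if_le_complete[OF assms(1) golomb_lengths_sums[OF \<open>1 \<le> k'\<close>]]
      unfolding M_def by simp
    obtain Q :: nat where Q: "T < real Q * (1 - real k' * a)"
      using reals_Archimedean3 \<open>real k' * a < 1\<close> by (metis diff_gt_0_iff_gt)
    define i where "i = Q * k'"
    have "Q < M i"
      unfolding M_def i_def using \<open>1 \<le> k'\<close> by (simp add: length_golomb)
    moreover have "T + real i * a < Q"
      using Q unfolding i_def by (simp add: algebra_simps)
    ultimately show False
      using below[of i] c_eq[of i] by simp
  qed
qed

lemma max_pointwise_redundancy_geom_le:
  assumes "0 < \<theta>" "\<theta> < 1"
    and "\<And>j. \<exists>i. length (c j) + real j * log 2 \<theta> \<le> length (d i) + real i * log 2 \<theta>"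
  shows "max_pointwise_redundancy c (geom_pmf \<theta>) \<le> max_pointwise_redundancy d (geom_pmf \<theta>)"
proof -
  have log_geom: "log 2 (geom_pmf \<theta> i) = log 2 (1 - \<theta>) + real i * log 2 \<theta>" for i
    using assms(1,2) by (simp add: geom_pmf_def log_mult log_nat_power)
  show ?thesis
    unfolding max_pointwise_redundancy_def
  proof (rule SUP_least)
    fix j
    obtain i where "length (c j) + real j * log 2 \<theta> \<le> length (d i) + real i * log 2 \<theta>"
      using assms(3) by blast
    then have "ereal (length (c j) + log 2 (geom_pmf \<theta> j)) \<le> ereal (length (d i) + log 2 (geom_pmf \<theta> i))"
      unfolding log_geom by simp
    then show "ereal (length (c j) + log 2 (geom_pmf \<theta> j)) \<le> (SUP i. ereal (length (d i) + log 2 (geom_pmf \<theta> i)))"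
      by (rule SUP_upper2[OF UNIV_I])
  qed
qed

lemma nat_ceiling_inverse_bounds:
  fixes a :: real
  assumes "0 < a"
  shows "1 \<le> nat \<lceil>1 / a\<rceil>" "1 \<le> real (nat \<lceil>1 / a\<rceil>) * a" "(real (nat \<lceil>1 / a\<rceil>) - 1) * a < 1"
proof -
  have "0 < \<lceil>1 / a\<rceil>"
    using assms by simp
  then show "1 \<le> nat \<lceil>1 / a\<rceil>"
    by linarith
  from \<open>0 < \<lceil>1 / a\<rceil>\<close> have k: "real (nat \<lceil>1 / a\<rceil>) = of_int \<lceil>1 / a\<rceil>"
    by simp
  have "1 = 1 / a * a"
    using assms by simp
  also have "\<dots> \<le> of_int \<lceil>1 / a\<rceil> * a"
    using assms by (intro mult_right_mono) simp_all
  finally show "1 \<le> real (nat \<lceil>1 / a\<rceil>) * a"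
    unfolding k .
  have "of_int \<lceil>1 / a\<rceil> - 1 < 1 / a"
    by linarith
  then show "(real (nat \<lceil>1 / a\<rceil>) - 1) * a < 1"
    using assms unfolding k by (simp add: field_simps)
qed

theorem theorem4:
  fixes \<theta> :: real
  assumes "0 < \<theta>" and "\<theta> < 1"
  defines "k \<equiv> nat \<lceil>- 1 / log 2 \<theta>\<rceil>"
  shows "prefix_code (golomb k) \<and>
         (\<forall>c. prefix_code c \<longrightarrow>
            max_pointwise_redundancy (golomb k) (geom_pmf \<theta>)
              \<le> max_pointwise_redundancy c (geom_pmf \<theta>))"
proof -
  define a where "a = - log 2 \<theta>"
  have "0 < a"
    using assms(1,2) unfolding a_def by simp
  have "k = nat \<lceil>1 / a\<rceil>"
    unfolding k_def a_def by simp
  with nat_ceiling_inverse_bounds[OF \<open>0 < a\<close>]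
  have "1 \<le> k" "1 \<le> real k * a" "(real k - 1) * a < 1"
    by simp_all
  have "max_pointwise_redundancy (golomb k) (geom_pmf \<theta>) \<le> max_pointwise_redundancy c (geom_pmf \<theta>)"
    if pc: "prefix_code c" for c
  proof (rule max_pointwise_redundancy_geom_le[OF assms(1,2)])
    fix j
    have "j mod k < k"
      using \<open>1 \<le> k\<close> by simp
    then obtain i where "length (golomb k (j mod k)) - real (j mod k) * a \<le> length (c i) - real i * a"
      using ex_prefix_code_length_ge_golomb[OF pc \<open>1 \<le> k\<close> less_imp_le[OF \<open>0 < a\<close>] \<open>(real k - 1) * a < 1\<close>]
      by blast
    with golomb_le_golomb_mod[OF \<open>1 \<le> real k * a\<close>, of j]
    have "length (golomb k j) - real j * a \<le> length (c i) - real i * a"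
      by linarith
    then show "\<exists>i. length (golomb k j) + real j * log 2 \<theta> \<le> length (c i) + real i * log 2 \<theta>"
      unfolding a_def by auto
  qed
  with prefix_code_golomb[OF \<open>1 \<le> k\<close>] show ?thesis
    by blast
qed

end
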